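(* Let $\frac12<s<1$, $M\in\mathbb R\setminus\{0\}$ and $c>0$. Then for all $n,m\in\mathbb Z^*$ and $k\in\{2,3\}$, $$|\lambda_n^1-\lambda_m^k|\ge\frac{3|M|}{\frac{2M^2}{\rho_1}+2}>0,$$ and for all $n,m\in\mathbb Z^*$ with $n\neq m$, $$|\lambda_n^1-\lambda_m^1|\ge c\left|\mathrm{sgn}(n)\rho_{|n|}^{1/(2s)}-\mathrm{sgn}(m)\rho_{|m|}^{1/(2s)}\right|>0.$$
   Context: $(-d_x^2)^s$ denotes the fractional Laplacian; $0<\rho_1\le\rho_2\le\cdots\to\infty$ are the eigenvalues (with multiplicity) of its realization on $L^2(-1,1)$ with zero exterior Dirichlet condition. Standing fact used: for $\frac12<s<1$ these eigenvalues are simple. Fix $M\in\mathbb R\setminus\{0\}$. For $n\ge1$, $\mu_n^1$ is the unique real root of $\mu^3+\rho_n\mu-M\rho_n=0$ (it lies strictly between $0$ and $M$), $\mu_n^2=-\frac{\mu_n^1}{2}+i\sqrt{3(\mu_n^1/2)^2+\rho_n}$ and $\mu_n^3=\overline{\mu_n^2}$. For $c\in\mathbb R$, $\mathbb Z^*=\mathbb Z\setminus\{0\}$, $S=\{(n,j):n\in\mathbb Z^*,\ j\in\{1,2,3\}\}$ and $\lambda_n^j=\mu_{|n|}^j+i\,\mathrm{sgn}(n)\,c\,\rho_{|n|}^{1/(2s)}$ for $(n,j)\in S$. *)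

theory Defs
  imports "HOL-Analysis.Analysis"
begin

text \<open>The eigenvalue sequence rho (indexed from 1) of the Dirichlet fractional
Laplacian on (-1,1) is treated as an abstract parameter.
Hypotheses used: 0 < rho 1, rho strictly increasing on indices >= 1
(simplicity of the eigenvalues, listed in increasing order), rho tends to infinity.\<close>

definition dirichlet_frac_eigs :: "(nat \<Rightarrow> real) \<Rightarrow> bool" where
  "dirichlet_frac_eigs \<rho> \<longleftrightarrow>
     0 < \<rho> 1 \<and> strict_mono_on {1..} \<rho> \<and> filterlim \<rho> at_top sequentially"

definition mu1 :: "real \<Rightarrow> real \<Rightarrow> real" where
  "mu1 M r = (THE x::real. x ^ 3 + r * x - M * r = 0)"

definition mu :: "real \<Rightarrow> real \<Rightarrow> nat \<Rightarrow> complex" where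
  "mu M r j =
     (if j = 1 then complex_of_real (mu1 M r)
      else if j = 2 then Complex (- mu1 M r / 2) (sqrt (3 * (mu1 M r / 2)^2 + r))
      else Complex (- mu1 M r / 2) (- sqrt (3 * (mu1 M r / 2)^2 + r)))"

definition lam :: "real \<Rightarrow> real \<Rightarrow> real \<Rightarrow> (nat \<Rightarrow> real) \<Rightarrow> int \<Rightarrow> nat \<Rightarrow> complex" where
  "lam s M c \<rho> n j =
     mu M (\<rho> (nat \<bar>n\<bar>)) j
     + \<i> * complex_of_real (real_of_int (sgn n) * c * \<rho> (nat \<bar>n\<bar>) powr (1 / (2 * s)))"

end

theory Submission
  imports Defs
begin

text \<open>The real root \<open>\<mu> = \<mu>\<^sub>n\<^sup>1\<close> lies between 0 and \<open>M\<close> and satisfies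
  \<open>\<mu>(\<mu>\<^sup>2 + \<rho>\<^sub>n) = M\<rho>\<^sub>n\<close>, hence \<open>|\<mu>| \<ge> |M|\<rho>\<^sub>n/(M\<^sup>2 + \<rho>\<^sub>n) \<ge> |M|/(M\<^sup>2/\<rho>\<^sub>1 + 1)\<close>.
  As \<open>\<mu>\<^sup>2\<close> and \<open>\<mu>\<^sup>3\<close> have real part \<open>-\<mu>\<^sup>1/2\<close>, the real part of \<open>\<lambda>\<^sub>n\<^sup>1 - \<lambda>\<^sub>m\<^sup>k\<close> is
  \<open>\<mu>\<^sub>n\<^sup>1 + \<mu>\<^sub>m\<^sup>1/2\<close>, a sum of two terms with the sign of \<open>M\<close>; this gives the first bound.
  The second bound is the imaginary part of \<open>\<lambda>\<^sub>n\<^sup>1 - \<lambda>\<^sub>m\<^sup>1\<close>, and it is positive because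
  \<open>\<rho>\<close> is strictly increasing (the eigenvalues are simple), so that
  \<open>n \<mapsto> sgn(n) \<rho>\<^bsub>|n|\<^esub>\<^sup>1\<^sup>/\<^sup>(\<^sup>2\<^sup>s\<^sup>)\<close> is injective on the nonzero integers.\<close>

lemma cubic_inj:
  fixes r x y :: real
  assumes "r > 0" "x^3 + r*x = y^3 + r*y"
  shows "x = y"
proof -
  have "x^2 + x*y + y^2 + r = (x + y/2)^2 + 3*y^2/4 + r"
    by (simp add: algebra_simps power2_eq_square)
  then have "x^2 + x*y + y^2 + r > 0"
    using assms(1) by (simp add: add_nonneg_pos)
  moreover have "(x - y) * (x^2 + x*y + y^2 + r) = 0"
    using assms(2) by (simp add: algebra_simps power2_eq_square power3_eq_cube)
  ultimately show ?thesis by simp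
qed

lemma cubic_root_between_0:
  fixes r M :: real
  assumes "r > 0"
  obtains x where "x^3 + r*x - M*r = 0" "x \<in> closed_segment 0 M"
proof -
  let ?f = "\<lambda>x::real. x^3 + r*x - M*r"
  have cont: "continuous_on S ?f" for S by (intro continuous_intros)
  show ?thesis
  proof (cases "M \<ge> 0")
    case True
    have "?f 0 \<le> 0" "0 \<le> ?f M" using True assms by auto
    then obtain x where "x \<in> {0..M}" "?f x = 0"
      using IVT'[of ?f 0 0 M] cont True by auto
    then show ?thesis using that True by (auto simp: closed_segment_eq_real_ivl)
  next
    case False
    have "?f M \<le> 0"
      using False by (simp add: power3_eq_cube mult_nonneg_nonpos mult_nonpos_nonpos)
    moreover have "0 \<le> ?f 0" using False assms by (simp add: mult_nonpos_nonneg)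
    ultimately obtain x where "x \<in> {M..0}" "?f x = 0"
      using IVT'[of ?f M 0 0] cont False by auto
    then show ?thesis using that False by (auto simp: closed_segment_eq_real_ivl)
  qed
qed

lemma mu1_eq:
  assumes "r > 0" "x^3 + r*x - M*r = 0"
  shows "mu1 M r = x"
  unfolding mu1_def
proof (rule the_equality)
  fix y :: real
  assume "y^3 + r*y - M*r = 0"
  then have "y^3 + r*y = x^3 + r*x" using assms(2) by linarith
  then show "y = x" by (rule cubic_inj[OF assms(1)])
qed (fact assms(2))

lemma mu1_root_between_0:
  assumes "r > 0"
  shows "(mu1 M r)^3 + r * mu1 M r = M * r" "mu1 M r \<in> closed_segment 0 M"
proof -
  obtain x where "x^3 + r*x - M*r = 0" "x \<in> closed_segment 0 M"
    by (rule cubic_root_between_0[OF assms])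
  with mu1_eq[OF assms] show "(mu1 M r)^3 + r * mu1 M r = M * r" "mu1 M r \<in> closed_segment 0 M"
    by auto
qed

lemma sgn_mu1:
  assumes "r > 0"
  shows "sgn (mu1 M r) = sgn M"
proof (cases "M = 0")
  case True
  then show ?thesis using mu1_root_between_0(2)[OF assms, where M = 0] by simp
next
  case False
  then have "mu1 M r \<noteq> 0" using mu1_root_between_0(1)[OF assms, where M = M] assms by auto
  with mu1_root_between_0(2)[OF assms, where M = M] show ?thesis
    by (auto simp: closed_segment_eq_real_ivl sgn_if split: if_splits)
qed

lemma abs_mu1_ge:
  assumes "r > 0"
  shows "\<bar>M\<bar> * r / (M^2 + r) \<le> \<bar>mu1 M r\<bar>"
proof -
  define x where "x = mu1 M r"
  have xr: "x^2 + r > 0" using assms by (simp add: add_nonneg_pos)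
  have root: "x * (x^2 + r) = M * r"
    using mu1_root_between_0(1)[OF assms, where M = M]
    by (simp add: x_def algebra_simps power2_eq_square power3_eq_cube)
  have "\<bar>x\<bar> \<le> \<bar>M\<bar>"
    using mu1_root_between_0(2)[OF assms, where M = M]
    by (auto simp: x_def closed_segment_eq_real_ivl split: if_splits)
  then have "x^2 \<le> M^2" by (simp add: abs_le_square_iff)
  then have "\<bar>M\<bar> * r / (M^2 + r) \<le> \<bar>M\<bar> * r / (x^2 + r)"
    using assms xr by (intro divide_left_mono) (auto intro: mult_pos_pos)
  also have "\<dots> = \<bar>x\<bar>"
  proof -
    have "\<bar>x\<bar> * (x^2 + r) = \<bar>M\<bar> * r"
      using arg_cong[OF root, of abs] xr assms by (simp add: abs_mult)
    then show ?thesis using xr by (simp add: field_simps)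
  qed
  finally show ?thesis by (simp add: x_def)
qed

lemma abs_mu1_ge_uniform:
  assumes "0 < r1" "r1 \<le> r"
  shows "\<bar>M\<bar> / (M^2 / r1 + 1) \<le> \<bar>mu1 M r\<bar>"
proof -
  have "0 < M^2 / r + 1" "0 < M^2 / r1 + 1"
    using assms by (auto intro: add_nonneg_pos)
  moreover have "M^2 / r \<le> M^2 / r1"
    using assms by (intro divide_left_mono) auto
  ultimately have "\<bar>M\<bar> / (M^2 / r1 + 1) \<le> \<bar>M\<bar> / (M^2 / r + 1)"
    by (intro divide_left_mono) auto
  also have "\<dots> = \<bar>M\<bar> * r / (M^2 + r)"
    using assms by (simp add: field_simps)
  finally show ?thesis using abs_mu1_ge[of r M] assms by linarith
qed

lemma Re_lam_diff:
  assumes "k \<in> {2, 3}"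
  shows "Re (lam s M c \<rho> n 1 - lam s M c \<rho> m k) = mu1 M (\<rho> (nat \<bar>n\<bar>)) + mu1 M (\<rho> (nat \<bar>m\<bar>)) / 2"
  using assms by (auto simp: lam_def mu_def)

lemma Im_lam_diff:
  "Im (lam s M c \<rho> n 1 - lam s M c \<rho> m 1) =
     c * (real_of_int (sgn n) * \<rho> (nat \<bar>n\<bar>) powr (1 / (2 * s))
          - real_of_int (sgn m) * \<rho> (nat \<bar>m\<bar>) powr (1 / (2 * s)))"
  by (simp add: lam_def mu_def algebra_simps)

lemma abs_add_half_same_sgn:
  fixes a b B :: real
  assumes "sgn a = sgn b" "B \<le> \<bar>a\<bar>" "B \<le> \<bar>b\<bar>"
  shows "3/2 * B \<le> \<bar>a + b/2\<bar>"
  using assms by (auto simp: sgn_if split: if_splits)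

lemma signed_extension_inj:
  fixes g :: "nat \<Rightarrow> real"
  assumes "inj_on g {1..}" "\<And>k. k \<ge> 1 \<Longrightarrow> g k > 0"
    and "n \<noteq> 0" "m \<noteq> 0" "n \<noteq> m"
  shows "real_of_int (sgn n) * g (nat \<bar>n\<bar>) \<noteq> real_of_int (sgn m) * g (nat \<bar>m\<bar>)"
proof
  assume eq: "real_of_int (sgn n) * g (nat \<bar>n\<bar>) = real_of_int (sgn m) * g (nat \<bar>m\<bar>)"
  have pos: "g (nat \<bar>k\<bar>) > 0" if "k \<noteq> 0" for k
    using assms(2) that by simp
  have sign: "0 < real_of_int (sgn k) * g (nat \<bar>k\<bar>) \<longleftrightarrow> 0 < k" if "k \<noteq> 0" for k
    using pos[OF that] that by (cases "k > 0") (simp_all add: zero_less_mult_iff)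
  have size: "\<bar>real_of_int (sgn k) * g (nat \<bar>k\<bar>)\<bar> = g (nat \<bar>k\<bar>)" if "k \<noteq> 0" for k
    using pos[OF that] that by (simp add: abs_mult abs_sgn_eq flip: of_int_abs)
  have "0 < n \<longleftrightarrow> 0 < m"
    using sign[OF assms(3)] sign[OF assms(4)] eq by simp
  moreover have "g (nat \<bar>n\<bar>) = g (nat \<bar>m\<bar>)"
    using size[OF assms(3)] size[OF assms(4)] arg_cong[OF eq, of abs] by simp
  then have "nat \<bar>n\<bar> = nat \<bar>m\<bar>"
    by (rule inj_onD[OF assms(1)]) (use assms(3,4) in simp_all)
  then have "\<bar>n\<bar> = \<bar>m\<bar>" by simp
  ultimately show False
    using assms(5) by (auto simp: abs_if split: if_splits)
qed

lemma dirichlet_frac_eigs_ge_first: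
  assumes "dirichlet_frac_eigs \<rho>" "k \<ge> 1"
  shows "\<rho> 1 \<le> \<rho> k" "0 < \<rho> k"
proof -
  have "0 < \<rho> 1" and "strict_mono_on {1..} \<rho>"
    using assms(1) unfolding dirichlet_frac_eigs_def by auto
  then show "\<rho> 1 \<le> \<rho> k" "0 < \<rho> k"
    using assms(2) strict_mono_on_leD[of "{1..}" \<rho> 1 k] by auto
qed

lemma dirichlet_frac_eigs_powr_inj:
  assumes "dirichlet_frac_eigs \<rho>" "e > 0"
  shows "inj_on (\<lambda>k. \<rho> k powr e) {1..}"
proof -
  have "strict_mono_on {1..} \<rho>"
    using assms(1) unfolding dirichlet_frac_eigs_def by auto
  then have "strict_mono_on {1..} (\<lambda>k. \<rho> k powr e)"
    using dirichlet_frac_eigs_ge_first(2)[OF assms(1)] assms(2)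
    by (auto simp: strict_mono_on_def intro!: powr_less_mono2 less_imp_le)
  then show ?thesis by (rule strict_mono_on_imp_inj_on)
qed

lemma cmod_lam_diff_ge_Re:
  assumes "dirichlet_frac_eigs \<rho>" "n \<noteq> 0" "m \<noteq> 0" "k \<in> {2, 3}"
  shows "3/2 * (\<bar>M\<bar> / (M^2 / \<rho> 1 + 1)) \<le> cmod (lam s M c \<rho> n 1 - lam s M c \<rho> m k)"
proof -
  note eigs = dirichlet_frac_eigs_ge_first[OF assms(1)]
  define a where "a = mu1 M (\<rho> (nat \<bar>n\<bar>))"
  define b where "b = mu1 M (\<rho> (nat \<bar>m\<bar>))"
  have "sgn a = sgn b"
    using sgn_mu1 eigs(2) assms(2,3) by (simp add: a_def b_def)
  moreover have "\<bar>M\<bar> / (M^2 / \<rho> 1 + 1) \<le> \<bar>a\<bar>" "\<bar>M\<bar> / (M^2 / \<rho> 1 + 1) \<le> \<bar>b\<bar>"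
    using abs_mu1_ge_uniform eigs assms(2,3) by (simp_all add: a_def b_def)
  ultimately have "3/2 * (\<bar>M\<bar> / (M^2 / \<rho> 1 + 1)) \<le> \<bar>a + b/2\<bar>"
    by (rule abs_add_half_same_sgn)
  also have "\<dots> \<le> cmod (lam s M c \<rho> n 1 - lam s M c \<rho> m k)"
    using abs_Re_le_cmod Re_lam_diff[OF assms(4)] by (metis a_def b_def)
  finally show ?thesis .
qed

lemma cmod_lam_diff_ge_Im:
  "\<bar>c\<bar> * \<bar>real_of_int (sgn n) * \<rho> (nat \<bar>n\<bar>) powr (1 / (2 * s))
          - real_of_int (sgn m) * \<rho> (nat \<bar>m\<bar>) powr (1 / (2 * s))\<bar>
     \<le> cmod (lam s M c \<rho> n 1 - lam s M c \<rho> m 1)"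
  using abs_Im_le_cmod[of "lam s M c \<rho> n 1 - lam s M c \<rho> m 1"]
  by (simp only: Im_lam_diff abs_mult)

lemma signed_eigs_powr_neq:
  assumes "dirichlet_frac_eigs \<rho>" "e > 0" "n \<noteq> 0" "m \<noteq> 0" "n \<noteq> m"
  shows "real_of_int (sgn n) * \<rho> (nat \<bar>n\<bar>) powr e \<noteq> real_of_int (sgn m) * \<rho> (nat \<bar>m\<bar>) powr e"
proof -
  have "0 < \<rho> k powr e" if "k \<ge> 1" for k
    using dirichlet_frac_eigs_ge_first(2)[OF assms(1) that] by simp
  then show ?thesis
    using signed_extension_inj[OF dirichlet_frac_eigs_powr_inj[OF assms(1,2)] _ assms(3-5)] by blast
qed

theorem lemma3p7:
  fixes s M c :: real and \<rho> :: "nat \<Rightarrow> real"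
  assumes "1/2 < s" and "s < 1" and "M \<noteq> 0" and "c > 0"
    and "dirichlet_frac_eigs \<rho>"
  shows "(\<forall>n m k. n \<noteq> 0 \<longrightarrow> m \<noteq> 0 \<longrightarrow> k \<in> {2, 3} \<longrightarrow>
            cmod (lam s M c \<rho> n 1 - lam s M c \<rho> m k) \<ge> 3 * \<bar>M\<bar> / (2 * M^2 / \<rho> 1 + 2))
       \<and> 3 * \<bar>M\<bar> / (2 * M^2 / \<rho> 1 + 2) > 0
       \<and> (\<forall>n m. n \<noteq> 0 \<longrightarrow> m \<noteq> 0 \<longrightarrow> n \<noteq> m \<longrightarrow>
            cmod (lam s M c \<rho> n 1 - lam s M c \<rho> m 1)
              \<ge> c * \<bar>real_of_int (sgn n) * \<rho> (nat \<bar>n\<bar>) powr (1 / (2 * s))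
                    - real_of_int (sgn m) * \<rho> (nat \<bar>m\<bar>) powr (1 / (2 * s))\<bar>
            \<and> c * \<bar>real_of_int (sgn n) * \<rho> (nat \<bar>n\<bar>) powr (1 / (2 * s))
                    - real_of_int (sgn m) * \<rho> (nat \<bar>m\<bar>) powr (1 / (2 * s))\<bar> > 0)"
proof -
  have "0 < \<rho> 1"
    using dirichlet_frac_eigs_ge_first(2)[OF assms(5), of 1] by simp
  then have bound_eq: "3 * \<bar>M\<bar> / (2 * M^2 / \<rho> 1 + 2) = 3/2 * (\<bar>M\<bar> / (M^2 / \<rho> 1 + 1))"
    and "0 < \<bar>M\<bar> / (M^2 / \<rho> 1 + 1)"
    using assms(3) by (auto simp: field_simps intro!: divide_pos_pos add_nonneg_pos)
  then have "0 < 3 * \<bar>M\<bar> / (2 * M^2 / \<rho> 1 + 2)"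
    by (simp only: bound_eq)
  moreover have "0 < 1 / (2 * s)"
    using assms(1) by simp
  ultimately show ?thesis
    using cmod_lam_diff_ge_Re[OF assms(5)] cmod_lam_diff_ge_Im[of c]
      signed_eigs_powr_neq[OF assms(5)] assms(4)
    by (auto simp: bound_eq)
qed

end
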